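(* Let $\Gamma$ be a distance-regular graph with classical parameters $(D,b,\alpha,\beta)$ such that $b\ge 2$ and $D\ge 3$, which is geometric with respect to a set $\mathcal C$ of Delsarte cliques (the members of $\mathcal C$ are called lines). Let $r=[D]$. If $\beta > (r-\alpha-1)\alpha b + \alpha$, then for every vertex $x$ and line $\ell$ with $d(x,\ell)=1$ and every two vertices $y_1,y_2$ on $\ell$ with $d(x,y_1)=d(x,y_2)=2$, we have $[x,y_1]=[x,y_2]$.
   Context: Distance-regular graph with intersection numbers $b_i,c_i$, valency $k=b_0$. For integer $b\ne1$, $[j]=\frac{b^j-1}{b-1}$. Classical parameters $(D,b,\alpha,\beta)$: diameter $D$, $b_i=([D]-[i])(\beta-\alpha[i])$ ($0\le i\le D-1$), $c_i=[i](1+\alpha[i-1])$ ($1\le i\le D$). A Delsarte clique is a clique with $1+\frac{k}{-\theta_{\min}}$ vertices, $\theta_{\min}$ the smallest adjacency eigenvalue. $\Gamma$ is geometric with respect to a set $\mathcal C$ of Delsarte cliques if every edge lies in exactly one member of $\mathcal C$. $d(x,\ell)=\min\{d(x,y): y\in\ell\}$. For vertices $x,y$ at distance 2, $[x,y]$ is the set of lines $\ell\in\mathcal C$ through $x$ such that $d(y,u)\le 2$ for all $u\in\ell$. *)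

theory Defs
  imports Main "HOL-Library.Multiset" Complex_Main
begin

definition simple_graph :: "'a set \<Rightarrow> ('a \<Rightarrow> 'a \<Rightarrow> bool) \<Rightarrow> bool" where
  "simple_graph V E \<longleftrightarrow> finite V \<and> (\<forall>x y. E x y \<longrightarrow> x \<in> V \<and> y \<in> V) \<and>
     (\<forall>x y. E x y \<longrightarrow> E y x) \<and> (\<forall>x. \<not> E x x)"

definition gdist :: "('a \<Rightarrow> 'a \<Rightarrow> bool) \<Rightarrow> 'a \<Rightarrow> 'a \<Rightarrow> nat" where
  "gdist E x y = (LEAST n. (E ^^ n) x y)"

definition connected_graph :: "'a set \<Rightarrow> ('a \<Rightarrow> 'a \<Rightarrow> bool) \<Rightarrow> bool" where
  "connected_graph V E \<longleftrightarrow> (\<forall>x\<in>V. \<forall>y\<in>V. \<exists>n. (E ^^ n) x y)"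

definition diameter_is :: "'a set \<Rightarrow> ('a \<Rightarrow> 'a \<Rightarrow> bool) \<Rightarrow> nat \<Rightarrow> bool" where
  "diameter_is V E D \<longleftrightarrow> (\<forall>x\<in>V. \<forall>y\<in>V. gdist E x y \<le> D) \<and>
     (\<exists>x\<in>V. \<exists>y\<in>V. gdist E x y = D)"

definition distance_regular ::
  "'a set \<Rightarrow> ('a \<Rightarrow> 'a \<Rightarrow> bool) \<Rightarrow> nat \<Rightarrow> (nat \<Rightarrow> nat) \<Rightarrow> (nat \<Rightarrow> nat) \<Rightarrow> bool" where
  "distance_regular V E D bi ci \<longleftrightarrow> simple_graph V E \<and> connected_graph V E \<and> diameter_is V E D \<and>
     (\<forall>x\<in>V. \<forall>y\<in>V. \<forall>i. gdist E x y = i \<longrightarrow>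
        (i < D \<longrightarrow> card {z\<in>V. E y z \<and> gdist E x z = i + 1} = bi i) \<and>
        (1 \<le> i \<and> i \<le> D \<longrightarrow> card {z\<in>V. E y z \<and> gdist E x z = i - 1} = ci i))"

definition gbr :: "int \<Rightarrow> nat \<Rightarrow> real" where
  "gbr b j = (real_of_int b ^ j - 1) / (real_of_int b - 1)"

definition classical_parameters ::
  "nat \<Rightarrow> (nat \<Rightarrow> nat) \<Rightarrow> (nat \<Rightarrow> nat) \<Rightarrow> int \<Rightarrow> real \<Rightarrow> real \<Rightarrow> bool" where
  "classical_parameters D bi ci b \<alpha> \<beta> \<longleftrightarrow> b \<noteq> 1 \<and>
     (\<forall>i<D. real (bi i) = (gbr b D - gbr b i) * (\<beta> - \<alpha> * gbr b i)) \<and>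
     (\<forall>i. 1 \<le> i \<and> i \<le> D \<longrightarrow> real (ci i) = gbr b i * (1 + \<alpha> * gbr b (i - 1)))"

definition adj_eigenvalue :: "'a set \<Rightarrow> ('a \<Rightarrow> 'a \<Rightarrow> bool) \<Rightarrow> real \<Rightarrow> bool" where
  "adj_eigenvalue V E \<theta> \<longleftrightarrow> (\<exists>f :: 'a \<Rightarrow> real. (\<exists>x\<in>V. f x \<noteq> 0) \<and>
     (\<forall>x\<in>V. (\<Sum>y\<in>{y\<in>V. E x y}. f y) = \<theta> * f x))"

definition theta_min :: "'a set \<Rightarrow> ('a \<Rightarrow> 'a \<Rightarrow> bool) \<Rightarrow> real" where
  "theta_min V E = Min {\<theta>. adj_eigenvalue V E \<theta>}"

definition is_clique :: "'a set \<Rightarrow> ('a \<Rightarrow> 'a \<Rightarrow> bool) \<Rightarrow> 'a set \<Rightarrow> bool" where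
  "is_clique V E K \<longleftrightarrow> K \<subseteq> V \<and> (\<forall>x\<in>K. \<forall>y\<in>K. x \<noteq> y \<longrightarrow> E x y)"

definition delsarte_clique :: "'a set \<Rightarrow> ('a \<Rightarrow> 'a \<Rightarrow> bool) \<Rightarrow> nat \<Rightarrow> 'a set \<Rightarrow> bool" where
  "delsarte_clique V E k K \<longleftrightarrow> is_clique V E K \<and>
     real (card K) = 1 + real k / (- theta_min V E)"

definition geometric :: "'a set \<Rightarrow> ('a \<Rightarrow> 'a \<Rightarrow> bool) \<Rightarrow> nat \<Rightarrow> 'a set set \<Rightarrow> bool" where
  "geometric V E k \<C> \<longleftrightarrow> (\<forall>K\<in>\<C>. delsarte_clique V E k K) \<and>
     (\<forall>x y. E x y \<longrightarrow> (\<exists>!K. K \<in> \<C> \<and> x \<in> K \<and> y \<in> K))"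

definition dist_set :: "('a \<Rightarrow> 'a \<Rightarrow> bool) \<Rightarrow> 'a \<Rightarrow> 'a set \<Rightarrow> nat" where
  "dist_set E x L = Min ((gdist E x) ` L)"

text \<open>[x,y]: lines through x all of whose vertices are within distance 2 of y.\<close>
definition line_set :: "('a \<Rightarrow> 'a \<Rightarrow> bool) \<Rightarrow> 'a set set \<Rightarrow> 'a \<Rightarrow> 'a \<Rightarrow> 'a set set" where
  "line_set E \<C> x y = {L\<in>\<C>. x \<in> L \<and> (\<forall>u\<in>L. gdist E y u \<le> 2)}"

end

(*
  The least eigenvalue of the graph is -[D]: summing an eigenvector over the spheres around a
  vertex gives an eigenvector of the tridiagonal intersection matrix, and a sign-alternating
  eigenvector of that matrix for -[D] bounds all its eigenvalues from below (Picone identity).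
  Hence lines have 1 + beta vertices, every vertex lies on [D] lines, and the distances from a
  vertex z to a line take two consecutive values i, i + 1, the smaller one exactly
  1 + alpha [i] times.

  Fix x at distance 1 from the line L, let N be its 1 + alpha neighbours on L and F = L - N, the
  vertices at distance 2 from x. For y in F, [x,y] consists of the lines through x containing a
  neighbour of y; those meeting N belong to every [x,y]. A line M through x missing N that does
  not reach every vertex of F reaches at most alpha b of them (double counting the edges between
  F and M), and there are at most [D] - 1 - alpha lines M through x missing N. The hypothesis on
  beta makes ([D] - 1 - alpha) alpha b smaller than |F| = beta - alpha, so some y0 in F is
  adjacent only to lines reaching all of F, whence [x,y0] is contained in every [x,y], y in F.
  As |[x,y]| (1 + alpha) = c_2 does not depend on y, all these sets are equal.
*)

theory Submission
  imports Defs "HOL-Computational_Algebra.Polynomial"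
begin

section \<open>Tridiagonal eigenvalue problems\<close>

text \<open>Right and left eigenvectors of the tridiagonal matrix with rows
  \<open>(cs i, as i, bs i)\<close> in columns \<open>i - 1, i, i + 1\<close>, for \<open>0 \<le> i \<le> n\<close>.\<close>
definition tridiag_right_eigen ::
  "nat \<Rightarrow> (nat \<Rightarrow> real) \<Rightarrow> (nat \<Rightarrow> real) \<Rightarrow> (nat \<Rightarrow> real) \<Rightarrow> real \<Rightarrow> (nat \<Rightarrow> real) \<Rightarrow> bool" where
  "tridiag_right_eigen n as bs cs \<mu> u \<longleftrightarrow>
     (\<forall>i\<le>n. cs i * u (i - 1) + as i * u i + bs i * u (Suc i) = \<mu> * u i)"

definition tridiag_left_eigen ::
  "nat \<Rightarrow> (nat \<Rightarrow> real) \<Rightarrow> (nat \<Rightarrow> real) \<Rightarrow> (nat \<Rightarrow> real) \<Rightarrow> real \<Rightarrow> (nat \<Rightarrow> real) \<Rightarrow> bool" where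
  "tridiag_left_eigen n as bs cs \<theta> y \<longleftrightarrow> y (Suc n) = 0 \<and>
     (\<forall>i\<le>n. \<theta> * y i = cs (Suc i) * y (Suc i) + as i * y i + (if i = 0 then 0 else bs (i - 1) * y (i - 1)))"

text \<open>The diagonal similarity making the matrix symmetric; for a distance-regular graph these
  are the sphere sizes \<open>k\<^sub>i\<close>.\<close>
primrec sym_weight :: "(nat \<Rightarrow> real) \<Rightarrow> (nat \<Rightarrow> real) \<Rightarrow> nat \<Rightarrow> real" where
  "sym_weight bs cs 0 = 1"
| "sym_weight bs cs (Suc i) = sym_weight bs cs i * bs i / cs (Suc i)"

lemma sym_weight_pos:
  assumes "\<forall>i<n. bs i > 0" "\<forall>i. 1 \<le> i \<and> i \<le> n \<longrightarrow> cs i > 0" "i \<le> n"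
  shows "sym_weight bs cs i > 0"
  using assms(3) by (induction i) (use assms(1,2) in \<open>auto simp: Suc_le_eq\<close>)

lemma sym_weight_Suc_mult:
  "cs (Suc i) \<noteq> 0 \<Longrightarrow> sym_weight bs cs (Suc i) * cs (Suc i) = sym_weight bs cs i * bs i"
  by simp

lemma tridiag_left_eigen_div_sym_weight:
  assumes bs_pos: "\<forall>i<n. bs i > 0" and cs_pos: "\<forall>i. 1 \<le> i \<and> i \<le> n \<longrightarrow> cs i > 0"
    and "cs 0 = 0" "bs n = 0" and y: "tridiag_left_eigen n as bs cs \<theta> y"
  shows "tridiag_right_eigen n as bs cs \<theta> (\<lambda>i. y i / sym_weight bs cs i)"
proof -
  define p where "p = sym_weight bs cs"
  define z where "z i = y i / p i" for i
  have p_pos: "p j > 0" if "j \<le> n" for j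
    unfolding p_def using sym_weight_pos[OF bs_pos cs_pos that] .
  have y_eq: "y j = p j * z j" if "j \<le> n" for j using p_pos[OF that] by (simp add: z_def)
  have p_step: "p (Suc j) * cs (Suc j) = p j * bs j" if "j < n" for j
    using cs_pos[rule_format, of "Suc j"] that unfolding p_def by (intro sym_weight_Suc_mult) simp
  have "cs i * z (i - 1) + as i * z i + bs i * z (Suc i) = \<theta> * z i" if i: "i \<le> n" for i
  proof -
    have upper: "cs (Suc i) * y (Suc i) = p i * (bs i * z (Suc i))"
    proof (cases "i = n")
      case True then show ?thesis using y \<open>bs n = 0\<close> by (simp add: tridiag_left_eigen_def)
    next
      case False
      then show ?thesis using i y_eq[of "Suc i"] p_step[of i] by (simp add: algebra_simps)
    qed
    have lower: "(if i = 0 then 0 else bs (i - 1) * y (i - 1)) = p i * (cs i * z (i - 1))"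
    proof (cases i)
      case 0 then show ?thesis using \<open>cs 0 = 0\<close> by simp
    next
      case (Suc j)
      then show ?thesis using i y_eq[of j] p_step[of j] by (simp add: algebra_simps)
    qed
    have "\<theta> * y i = cs (Suc i) * y (Suc i) + as i * y i + (if i = 0 then 0 else bs (i - 1) * y (i - 1))"
      using y i by (simp add: tridiag_left_eigen_def)
    then have "p i * (\<theta> * z i) = p i * (cs i * z (i - 1) + as i * z i + bs i * z (Suc i))"
      unfolding upper lower y_eq[OF i] by (simp add: algebra_simps)
    then show ?thesis using p_pos[OF i] by simp
  qed
  then show ?thesis by (simp add: tridiag_right_eigen_def z_def p_def)
qed

lemma tridiag_eigen_picone_identity:
  assumes "cs 0 = 0" "bs n = 0"
    and p_step: "\<And>i. i < n \<Longrightarrow> p (Suc i) * cs (Suc i) = p i * bs i"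
    and u: "tridiag_right_eigen n as bs cs \<mu> u" and u_nz: "\<forall>i\<le>n. u i \<noteq> 0"
    and z: "tridiag_right_eigen n as bs cs \<theta> z"
  shows "(\<theta> - \<mu>) * (\<Sum>i\<le>n. p i * (z i)\<^sup>2) =
    (\<Sum>i<n. - (p i * bs i) * (z i * u (Suc i) - z (Suc i) * u i)\<^sup>2 / (u i * u (Suc i)))"
proof -
  define h where "h i = p i * bs i * (z i * z (Suc i) - (z i)\<^sup>2 * u (Suc i) / u i)" for i
  define l where "l i = p i * cs i * (z i * z (i - 1) - (z i)\<^sup>2 * u (i - 1) / u i)" for i
  have local: "p i * (\<theta> - \<mu>) * (z i)\<^sup>2 = l i + h i" if i: "i \<le> n" for i
  proof -
    have \<theta>: "\<theta> * z i = cs i * z (i - 1) + as i * z i + bs i * z (Suc i)"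
      using z i by (simp add: tridiag_right_eigen_def)
    have \<mu>: "\<mu> = (cs i * u (i - 1) + as i * u i + bs i * u (Suc i)) / u i"
      using u u_nz i by (simp add: tridiag_right_eigen_def field_simps)
    have "p i * (\<theta> - \<mu>) * (z i)\<^sup>2 = p i * z i * (\<theta> * z i) - p i * (z i)\<^sup>2 * \<mu>"
      by (simp add: algebra_simps power2_eq_square)
    also have "\<dots> = l i + h i"
      unfolding \<theta> \<mu> l_def h_def using u_nz i by (simp add: field_simps power2_eq_square)
    finally show ?thesis .
  qed
  have edge: "h i + l (Suc i) = - (p i * bs i) * (z i * u (Suc i) - z (Suc i) * u i)\<^sup>2 / (u i * u (Suc i))"
    if i: "i < n" for i
    using p_step u_nz i unfolding h_def l_def by (simp add: field_simps power2_eq_square)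
  have partial: "(\<Sum>i\<le>m. p i * (\<theta> - \<mu>) * (z i)\<^sup>2) = (\<Sum>i<m. h i + l (Suc i)) + h m"
    if "m \<le> n" for m
    using that
  proof (induction m)
    case 0 then show ?case using local[of 0] \<open>cs 0 = 0\<close> by (simp add: l_def)
  next
    case (Suc m) then show ?case using local[of "Suc m"] by simp
  qed
  have "(\<theta> - \<mu>) * (\<Sum>i\<le>n. p i * (z i)\<^sup>2) = (\<Sum>i\<le>n. p i * (\<theta> - \<mu>) * (z i)\<^sup>2)"
    by (simp add: sum_distrib_left algebra_simps)
  also have "\<dots> = (\<Sum>i<n. h i + l (Suc i))"
    using partial[of n] \<open>bs n = 0\<close> by (simp add: h_def)
  also have "\<dots> = (\<Sum>i<n. - (p i * bs i) * (z i * u (Suc i) - z (Suc i) * u i)\<^sup>2 / (u i * u (Suc i)))"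
    using edge by simp
  finally show ?thesis .
qed

text \<open>After symmetrising with the weights, every term of the Picone identity is nonnegative.\<close>
lemma tridiag_eigenvalue_lower_bound:
  assumes bs_pos: "\<forall>i<n. bs i > 0" and cs_pos: "\<forall>i. 1 \<le> i \<and> i \<le> n \<longrightarrow> cs i > 0"
    and "cs 0 = 0" "bs n = 0"
    and u: "tridiag_right_eigen n as bs cs \<mu> u" and u_nz: "\<forall>i\<le>n. u i \<noteq> 0"
    and u_alt: "\<forall>i<n. u i * u (Suc i) < 0"
    and y: "tridiag_left_eigen n as bs cs \<theta> y" and "y 0 \<noteq> 0"
  shows "\<mu> \<le> \<theta>"
proof -
  define p where "p = sym_weight bs cs"
  define z where "z i = y i / p i" for i
  have p_pos: "p i > 0" if "i \<le> n" for i unfolding p_def using sym_weight_pos[OF bs_pos cs_pos that] .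
  have p_step: "p (Suc i) * cs (Suc i) = p i * bs i" if "i < n" for i
    using cs_pos[rule_format, of "Suc i"] that unfolding p_def by (intro sym_weight_Suc_mult) simp
  have z: "tridiag_right_eigen n as bs cs \<theta> z"
    unfolding z_def p_def by (rule tridiag_left_eigen_div_sym_weight[OF bs_pos cs_pos assms(3,4) y])
  have terms_nonneg: "- (p i * bs i) * (z i * u (Suc i) - z (Suc i) * u i)\<^sup>2 / (u i * u (Suc i)) \<ge> 0"
    if "i < n" for i
    using p_pos[of i] bs_pos u_alt that by (intro divide_nonpos_neg) (auto simp: mult_nonneg_nonneg)
  have "(\<theta> - \<mu>) * (\<Sum>i\<le>n. p i * (z i)\<^sup>2) =
    (\<Sum>i<n. - (p i * bs i) * (z i * u (Suc i) - z (Suc i) * u i)\<^sup>2 / (u i * u (Suc i)))"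
    by (rule tridiag_eigen_picone_identity[OF assms(3,4) _ u u_nz z]) (fact p_step)
  also have "\<dots> \<ge> 0" using terms_nonneg by (intro sum_nonneg) simp
  finally have "(\<theta> - \<mu>) * (\<Sum>i\<le>n. p i * (z i)\<^sup>2) \<ge> 0" .
  moreover have "(\<Sum>i\<le>n. p i * (z i)\<^sup>2) \<ge> p 0 * (z 0)\<^sup>2"
  proof (rule member_le_sum)
    fix i assume "i \<in> {..n} - {0}"
    then show "0 \<le> p i * (z i)\<^sup>2" using p_pos[of i] by simp
  qed auto
  moreover have "p 0 * (z 0)\<^sup>2 > 0" using \<open>y 0 \<noteq> 0\<close> by (simp add: z_def p_def)
  ultimately show ?thesis by (smt (verit) zero_le_mult_iff)
qed

fun tridiag_poly :: "(nat \<Rightarrow> real) \<Rightarrow> (nat \<Rightarrow> real) \<Rightarrow> (nat \<Rightarrow> real) \<Rightarrow> nat \<Rightarrow> real poly" where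
  "tridiag_poly as bs cs 0 = 1"
| "tridiag_poly as bs cs (Suc 0) = smult (1 / cs 1) [:- as 0, 1:]"
| "tridiag_poly as bs cs (Suc (Suc i)) = smult (1 / cs (Suc (Suc i)))
     ([:- as (Suc i), 1:] * tridiag_poly as bs cs (Suc i) - smult (bs i) (tridiag_poly as bs cs i))"

lemma degree_linear_mult: "p \<noteq> 0 \<Longrightarrow> degree ([:a, 1:] * p) = Suc (degree p)"
  for p :: "real poly"
  by (subst degree_mult_eq) auto

lemma degree_linear_mult_diff:
  "p \<noteq> 0 \<Longrightarrow> degree q < Suc (degree p) \<Longrightarrow> degree ([:a, 1:] * p - q) = Suc (degree p)"
  for p q :: "real poly"
proof -
  assume "p \<noteq> 0" "degree q < Suc (degree p)"
  then have "degree ([:a, 1:] * p) = Suc (degree p)" using degree_linear_mult by blast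
  then show ?thesis
    using degree_add_eq_left[of "- q" "[:a, 1:] * p"] \<open>degree q < Suc (degree p)\<close>
    by (simp only: degree_minus diff_conv_add_uminus)
qed

lemma degree_tridiag_poly:
  assumes "\<forall>i. 1 \<le> i \<and> i \<le> n \<longrightarrow> cs i > 0" "m \<le> n"
  shows "degree (tridiag_poly as bs cs m) = m \<and> tridiag_poly as bs cs m \<noteq> 0"
  using assms(2)
proof (induction m rule: induct_nat_012)
  case 1
  then show ?case using assms(1)[rule_format, of 1] by auto
next
  case (ge2 i)
  let ?P = "tridiag_poly as bs cs"
  have "degree ([:- as (Suc i), 1:] * ?P (Suc i) - smult (bs i) (?P i)) = Suc (Suc i)"
    using ge2 by (subst degree_linear_mult_diff) auto
  then show ?case using assms(1) "ge2.prems" by auto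
qed simp

lemma tridiag_left_eigen_eq_poly:
  assumes cs_pos: "\<forall>i. 1 \<le> i \<and> i \<le> n \<longrightarrow> cs i > 0"
    and y: "tridiag_left_eigen n as bs cs \<theta> y" and "m \<le> n"
  shows "y m = y 0 * poly (tridiag_poly as bs cs m) \<theta>"
  using assms(3)
proof (induction m rule: induct_nat_012)
  case 1
  have "\<theta> * y 0 = cs 1 * y 1 + as 0 * y 0"
    using y by (auto simp: tridiag_left_eigen_def)
  moreover have "cs 1 > 0" using cs_pos[rule_format, of 1] 1 by simp
  ultimately show ?case by (simp add: field_simps)
next
  case (ge2 i)
  have "\<theta> * y (Suc i) = cs (Suc (Suc i)) * y (Suc (Suc i)) + as (Suc i) * y (Suc i) + bs i * y i"
    using y "ge2.prems" by (auto simp: tridiag_left_eigen_def)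
  moreover have "cs (Suc (Suc i)) > 0" using cs_pos "ge2.prems" by auto
  ultimately show ?case using ge2 by (simp add: field_simps)
qed simp

lemma finite_tridiag_eigenvalues:
  assumes cs_pos: "\<forall>i. 1 \<le> i \<and> i \<le> n \<longrightarrow> cs i > 0" and "n \<ge> 1"
  shows "finite {\<theta>. \<exists>y. tridiag_left_eigen n as bs cs \<theta> y \<and> y 0 \<noteq> 0}"
proof -
  let ?P = "tridiag_poly as bs cs"
  define Q where "Q = [:- as n, 1:] * ?P n - smult (bs (n - 1)) (?P (n - 1))"
  have "degree Q = Suc n"
    using degree_tridiag_poly[OF cs_pos, of n] degree_tridiag_poly[OF cs_pos, of "n - 1"]
    unfolding Q_def by (subst degree_linear_mult_diff) auto
  then have "Q \<noteq> 0" by auto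
  moreover have "poly Q \<theta> = 0" if y: "tridiag_left_eigen n as bs cs \<theta> y" "y 0 \<noteq> 0" for \<theta> y
  proof -
    have "\<theta> * y n = as n * y n + bs (n - 1) * y (n - 1)"
      using y \<open>n \<ge> 1\<close> by (auto simp: tridiag_left_eigen_def)
    then have "y 0 * poly Q \<theta> = 0"
      using tridiag_left_eigen_eq_poly[OF cs_pos y(1), of n] tridiag_left_eigen_eq_poly[OF cs_pos y(1), of "n - 1"]
      unfolding Q_def by (simp add: algebra_simps)
    then show ?thesis using y(2) by simp
  qed
  ultimately show ?thesis using poly_roots_finite[of Q] by (auto elim: finite_subset[rotated])
qed

section \<open>Distance in connected graphs\<close>

locale connected_simple_graph =
  fixes V :: "'a set" and E :: "'a \<Rightarrow> 'a \<Rightarrow> bool"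
  assumes simple: "simple_graph V E" and connected: "connected_graph V E"
begin

definition neighbours :: "'a \<Rightarrow> 'a set" where
  "neighbours x = {y\<in>V. E x y}"

lemma finite_vertices: "finite V"
  using simple unfolding simple_graph_def by blast

lemma adj_vertices: "E x y \<Longrightarrow> x \<in> V \<and> y \<in> V"
  using simple unfolding simple_graph_def by blast

lemma adj_sym: "E x y \<Longrightarrow> E y x"
  using simple unfolding simple_graph_def by blast

lemma adj_irrefl: "\<not> E x x"
  using simple unfolding simple_graph_def by blast

lemma relpowp_adj_sym: "(E ^^ n) x y \<Longrightarrow> (E ^^ n) y x"
proof (induction n arbitrary: y)
  case 0 then show ?case by (auto elim: relpowp_0_E)
next
  case (Suc n)
  then obtain w where "(E ^^ n) x w" "E w y" by (auto elim: relpowp_Suc_E)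
  then show ?case using Suc.IH adj_sym relpowp_Suc_I2 by metis
qed

lemma gdist_walk: "x \<in> V \<Longrightarrow> y \<in> V \<Longrightarrow> (E ^^ gdist E x y) x y"
  using connected unfolding gdist_def connected_graph_def by (metis LeastI)

lemma gdist_le: "(E ^^ n) x y \<Longrightarrow> gdist E x y \<le> n"
  unfolding gdist_def by (rule Least_le)

lemma gdist_commute: "x \<in> V \<Longrightarrow> y \<in> V \<Longrightarrow> gdist E x y = gdist E y x"
  using gdist_walk gdist_le relpowp_adj_sym by (metis le_antisym)

lemma gdist_self [simp]: "gdist E x x = 0"
  using gdist_le[of 0 x x] by (simp add: relpowp_0_I)

lemma gdist_eq_0_iff: "x \<in> V \<Longrightarrow> y \<in> V \<Longrightarrow> gdist E x y = 0 \<longleftrightarrow> x = y"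
  using gdist_walk[of x y] by (auto elim: relpowp_0_E)

lemma gdist_eq_1_iff: "x \<in> V \<Longrightarrow> y \<in> V \<Longrightarrow> gdist E x y = 1 \<longleftrightarrow> E x y"
proof
  assume "x \<in> V" "y \<in> V" "gdist E x y = 1"
  then show "E x y" using gdist_walk[of x y] by (metis relpowp_1)
next
  assume "x \<in> V" "y \<in> V" "E x y"
  moreover have "gdist E x y \<le> 1" using gdist_le[of 1 x y] \<open>E x y\<close> by (metis relpowp_1)
  ultimately show "gdist E x y = 1" using gdist_eq_0_iff adj_irrefl by fastforce
qed

lemma gdist_adj: "E x y \<Longrightarrow> gdist E x y = 1"
  using gdist_eq_1_iff adj_vertices by blast

lemma gdist_adj_le: "z \<in> V \<Longrightarrow> E a c \<Longrightarrow> gdist E z c \<le> gdist E z a + 1"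
  using gdist_walk[of z a] adj_vertices[of a c] gdist_le[of "Suc (gdist E z a)" z c]
  by (auto intro: relpowp_Suc_I)

lemma gdist_Suc_obtain:
  assumes "z \<in> V" "w \<in> V" "gdist E z w = Suc n"
  obtains p where "p \<in> V" "E p w" "gdist E z p = n"
proof -
  obtain p where p: "(E ^^ n) z p" "E p w"
    using gdist_walk[OF assms(1,2)] assms(3) by (auto elim: relpowp_Suc_E)
  then have "gdist E z p \<le> n" "p \<in> V" using gdist_le adj_vertices by auto
  moreover have "Suc n \<le> gdist E z p + 1" using gdist_adj_le[OF assms(1) p(2)] assms(3) by simp
  ultimately show ?thesis using that p(2) by simp
qed

lemma finite_neighbours: "finite (neighbours x)"
  unfolding neighbours_def using finite_vertices by simp

lemma sum_neighbours_swap: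
  "(\<Sum>v\<in>{v\<in>V. P v}. \<Sum>w\<in>neighbours v. f w) = (\<Sum>w\<in>V. f w * real (card {v\<in>neighbours w. P v}))"
proof -
  have "(\<Sum>v\<in>{v\<in>V. P v}. \<Sum>w\<in>neighbours v. f w) = (\<Sum>v\<in>{v\<in>V. P v}. \<Sum>w\<in>V. if E v w then f w else 0)"
    unfolding neighbours_def using finite_vertices by (simp add: sum.inter_filter)
  also have "\<dots> = (\<Sum>w\<in>V. \<Sum>v\<in>{v\<in>V. P v}. if E v w then f w else 0)"
    by (rule sum.swap)
  also have "\<dots> = (\<Sum>w\<in>V. f w * real (card {v\<in>neighbours w. P v}))"
  proof (rule sum.cong)
    fix w assume "w \<in> V"
    have "{v\<in>neighbours w. P v} = {v\<in>V. P v} \<inter> {v. E v w}"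
      unfolding neighbours_def using adj_sym by auto
    then show "(\<Sum>v\<in>{v\<in>V. P v}. if E v w then f w else 0) = f w * real (card {v\<in>neighbours w. P v})"
      using finite_vertices by (simp add: sum.If_cases)
  qed simp
  finally show ?thesis .
qed

end

section \<open>Distance-regular graphs and their least eigenvalue\<close>

locale distance_regular_graph =
  fixes V :: "'a set" and E :: "'a \<Rightarrow> 'a \<Rightarrow> bool" and D :: nat and bi ci :: "nat \<Rightarrow> nat"
  assumes drg: "distance_regular V E D bi ci"

sublocale distance_regular_graph \<subseteq> connected_simple_graph V E
  using drg unfolding distance_regular_def by unfold_locales blast+

context distance_regular_graph
begin

lemma gdist_le_diameter: "x \<in> V \<Longrightarrow> y \<in> V \<Longrightarrow> gdist E x y \<le> D"
  using drg unfolding distance_regular_def diameter_is_def by blast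

lemma card_b_neighbours:
  "x \<in> V \<Longrightarrow> y \<in> V \<Longrightarrow> gdist E x y = i \<Longrightarrow> i < D \<Longrightarrow>
   card {z\<in>V. E y z \<and> gdist E x z = i + 1} = bi i"
  using drg unfolding distance_regular_def by blast

lemma card_c_neighbours:
  "x \<in> V \<Longrightarrow> y \<in> V \<Longrightarrow> gdist E x y = i \<Longrightarrow> 1 \<le> i \<Longrightarrow> i \<le> D \<Longrightarrow>
   card {z\<in>V. E y z \<and> gdist E x z = i - 1} = ci i"
  using drg unfolding distance_regular_def by blast

lemma exists_vertex_all_distances: "\<exists>x\<in>V. \<forall>j\<le>D. \<exists>w\<in>V. gdist E x w = j"
proof -
  obtain x y where xy: "x \<in> V" "y \<in> V" "gdist E x y = D"
    using drg unfolding distance_regular_def diameter_is_def by blast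
  have "\<exists>w\<in>V. gdist E x w = D - t" if "t \<le> D" for t
    using that
  proof (induction t)
    case 0 then show ?case using xy by auto
  next
    case (Suc t)
    then obtain w where "w \<in> V" "gdist E x w = Suc (D - Suc t)" by auto
    then obtain p where "p \<in> V" "gdist E x p = D - Suc t"
      using gdist_Suc_obtain[OF xy(1)] by blast
    then show ?case by blast
  qed
  then have "\<exists>w\<in>V. gdist E x w = j" if "j \<le> D" for j
    using that by (metis diff_diff_cancel diff_le_self)
  then show ?thesis using xy(1) by blast
qed

lemma bi_pos: "i < D \<Longrightarrow> bi i > 0"
proof -
  assume "i < D"
  obtain x where x: "x \<in> V" "\<forall>j\<le>D. \<exists>w\<in>V. gdist E x w = j"
    using exists_vertex_all_distances by blast
  then obtain w where w: "w \<in> V" "gdist E x w = Suc i" using \<open>i < D\<close> Suc_leI by blast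
  then obtain p where p: "p \<in> V" "E p w" "gdist E x p = i" using gdist_Suc_obtain x(1) by blast
  have "w \<in> {z\<in>V. E p z \<and> gdist E x z = i + 1}" using w p by simp
  then have "card {z\<in>V. E p z \<and> gdist E x z = i + 1} > 0"
    using finite_vertices by (auto simp: card_gt_0_iff)
  then show ?thesis using card_b_neighbours[OF x(1) p(1) p(3) \<open>i < D\<close>] by simp
qed

lemma ci_pos: "1 \<le> i \<Longrightarrow> i \<le> D \<Longrightarrow> ci i > 0"
proof -
  assume i: "1 \<le> i" "i \<le> D"
  obtain x where x: "x \<in> V" "\<forall>j\<le>D. \<exists>w\<in>V. gdist E x w = j"
    using exists_vertex_all_distances by blast
  then obtain w where w: "w \<in> V" "gdist E x w = Suc (i - 1)" using i by auto
  then obtain p where p: "p \<in> V" "E p w" "gdist E x p = i - 1" using gdist_Suc_obtain x(1) by blast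
  have "p \<in> {z\<in>V. E w z \<and> gdist E x z = i - 1}" using p adj_sym by simp
  then have "card {z\<in>V. E w z \<and> gdist E x z = i - 1} > 0"
    using finite_vertices by (auto simp: card_gt_0_iff)
  then show ?thesis using card_c_neighbours[OF x(1) w(1) _ i] w(2) i(1) by simp
qed

text \<open>The intersection numbers as reals, with the conventions \<open>b\<^sub>D = c\<^sub>0 = 0\<close>
  (the hypothesis \<open>distance_regular\<close> leaves \<open>bi D\<close> and \<open>ci 0\<close> unconstrained).\<close>
definition b_num :: "nat \<Rightarrow> real" where
  "b_num i = (if i < D then real (bi i) else 0)"

definition c_num :: "nat \<Rightarrow> real" where
  "c_num i = (if i = 0 then 0 else real (ci i))"

definition a_num :: "nat \<Rightarrow> real" where
  "a_num i = real (bi 0) - b_num i - c_num i"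

lemma card_neighbours: "0 < D \<Longrightarrow> x \<in> V \<Longrightarrow> card (neighbours x) = bi 0"
  using card_b_neighbours[of x x 0] unfolding neighbours_def by (simp add: gdist_adj cong: conj_cong)

lemma gdist_neighbour_cases:
  assumes "z \<in> V" "w \<in> neighbours x"
  shows "Suc (gdist E z w) = gdist E z x \<or> gdist E z w = gdist E z x \<or> gdist E z w = Suc (gdist E z x)"
  using gdist_adj_le[OF assms(1), of x w] gdist_adj_le[OF assms(1), of w x] assms(2) adj_sym
  unfolding neighbours_def by fastforce

lemma card_neighbours_closer:
  assumes "z \<in> V" "x \<in> V"
  shows "real (card {w\<in>neighbours x. Suc (gdist E z w) = gdist E z x}) = c_num (gdist E z x)"
proof (cases "gdist E z x = 0")
  case False
  then have "{w\<in>neighbours x. Suc (gdist E z w) = gdist E z x} = {w\<in>V. E x w \<and> gdist E z w = gdist E z x - 1}"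
    unfolding neighbours_def by auto
  then show ?thesis
    using card_c_neighbours[OF assms refl] gdist_le_diameter[OF assms] False by (simp add: c_num_def)
qed (simp add: c_num_def)

lemma card_neighbours_farther:
  assumes "z \<in> V" "x \<in> V"
  shows "real (card {w\<in>neighbours x. gdist E z w = Suc (gdist E z x)}) = b_num (gdist E z x)"
proof (cases "gdist E z x < D")
  case True
  have "{w\<in>neighbours x. gdist E z w = Suc (gdist E z x)} = {w\<in>V. E x w \<and> gdist E z w = gdist E z x + 1}"
    unfolding neighbours_def by auto
  then show ?thesis using card_b_neighbours[OF assms refl True] True by (simp add: b_num_def)
next
  case False
  then have empty: "{w\<in>neighbours x. gdist E z w = Suc (gdist E z x)} = {}"
    using gdist_le_diameter[OF assms(1)] unfolding neighbours_def by fastforce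
  show ?thesis unfolding empty using False by (simp add: b_num_def)
qed

lemma sum_neighbours_gdist:
  assumes "0 < D" "z \<in> V" "x \<in> V"
  defines "j \<equiv> gdist E z x"
  shows "(\<Sum>w\<in>neighbours x. h (gdist E z w)) = c_num j * h (j - 1) + a_num j * h j + b_num j * h (Suc j)"
proof -
  define Nc where "Nc = {w\<in>neighbours x. Suc (gdist E z w) = j}"
  define Na where "Na = {w\<in>neighbours x. gdist E z w = j}"
  define Nb where "Nb = {w\<in>neighbours x. gdist E z w = Suc j}"
  have split: "neighbours x = Nc \<union> Na \<union> Nb"
    using gdist_neighbour_cases[OF assms(2)] unfolding Nc_def Na_def Nb_def j_def by auto
  have finite: "finite Nc" "finite Na" "finite Nb"
    unfolding Nc_def Na_def Nb_def using finite_neighbours by auto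
  have disjoint: "(Nc \<union> Na) \<inter> Nb = {}" "Nc \<inter> Na = {}"
    unfolding Nc_def Na_def Nb_def by auto
  have card_Nc: "real (card Nc) = c_num j" and card_Nb: "real (card Nb) = b_num j"
    unfolding Nc_def Nb_def j_def using card_neighbours_closer card_neighbours_farther assms by auto
  have "bi 0 = card Nc + card Na + card Nb"
    using card_neighbours[OF assms(1,3)] split finite disjoint by (simp add: card_Un_disjoint)
  then have card_Na: "real (card Na) = a_num j"
    using card_Nc card_Nb unfolding a_num_def by simp
  have "(\<Sum>w\<in>neighbours x. h (gdist E z w))
      = (\<Sum>w\<in>Nc. h (gdist E z w)) + (\<Sum>w\<in>Na. h (gdist E z w)) + (\<Sum>w\<in>Nb. h (gdist E z w))"
    using split finite disjoint by (simp add: sum.union_disjoint)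
  also have "\<dots> = (\<Sum>w\<in>Nc. h (j - 1)) + (\<Sum>w\<in>Na. h j) + (\<Sum>w\<in>Nb. h (Suc j))"
    unfolding Nc_def Na_def Nb_def by (intro arg_cong2[where f = "(+)"] sum.cong) auto
  finally show ?thesis using card_Nc card_Na card_Nb by simp
qed

lemma card_neighbours_at_distance:
  assumes "0 < D" "z \<in> V" "w \<in> V"
  shows "real (card {v\<in>neighbours w. gdist E z v = i}) =
    (if gdist E z w = Suc i then c_num (Suc i) else 0) + (if gdist E z w = i then a_num i else 0)
    + (if i \<noteq> 0 \<and> gdist E z w = i - 1 then b_num (i - 1) else 0)"
proof -
  define j where "j = gdist E z w"
  have "real (card {v\<in>neighbours w. gdist E z v = i}) = (\<Sum>v\<in>neighbours w. if gdist E z v = i then 1 else 0)"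
    using finite_neighbours by (simp add: sum.If_cases Int_def)
  also have "\<dots> = c_num j * (if j - 1 = i then 1 else 0) + a_num j * (if j = i then 1 else 0)
      + b_num j * (if Suc j = i then 1 else 0)"
    using sum_neighbours_gdist[OF assms, of "\<lambda>t. if t = i then 1 else 0"] unfolding j_def by simp
  also have "\<dots> = (if j = Suc i then c_num (Suc i) else 0) + (if j = i then a_num i else 0)
      + (if i \<noteq> 0 \<and> j = i - 1 then b_num (i - 1) else 0)"
    by (cases j) (auto simp: c_num_def)
  finally show ?thesis unfolding j_def .
qed

lemma adj_eigenvalue_tridiag_left_eigen:
  assumes "0 < D" and "adj_eigenvalue V E \<theta>"
  shows "\<exists>y. tridiag_left_eigen D a_num b_num c_num \<theta> y \<and> y 0 \<noteq> 0"
proof -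
  obtain f x where f: "\<forall>v\<in>V. (\<Sum>w\<in>neighbours v. f w) = \<theta> * f v" and x: "x \<in> V" "f x \<noteq> 0"
    using assms(2) unfolding adj_eigenvalue_def neighbours_def by blast
  define y where "y i = (\<Sum>w\<in>{w\<in>V. gdist E x w = i}. f w)" for i
  have "{w\<in>V. gdist E x w = 0} = {x}" using gdist_eq_0_iff x by auto
  then have "y 0 = f x" unfolding y_def by simp
  moreover have "y (Suc D) = 0"
    using gdist_le_diameter[OF x(1)] unfolding y_def by (intro sum.neutral) fastforce
  moreover have "\<theta> * y i = c_num (Suc i) * y (Suc i) + a_num i * y i
    + (if i = 0 then 0 else b_num (i - 1) * y (i - 1))" for i
  proof -
    have "\<theta> * y i = (\<Sum>v\<in>{v\<in>V. gdist E x v = i}. \<Sum>w\<in>neighbours v. f w)"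
      unfolding y_def sum_distrib_left using f by (intro sum.cong) auto
    also have "\<dots> = (\<Sum>w\<in>V. f w * real (card {v\<in>neighbours w. gdist E x v = i}))"
      by (rule sum_neighbours_swap)
    also have "\<dots> = (\<Sum>w\<in>V. (if gdist E x w = Suc i then c_num (Suc i) * f w else 0)
       + (if gdist E x w = i then a_num i * f w else 0)
       + (if i \<noteq> 0 \<and> gdist E x w = i - 1 then b_num (i - 1) * f w else 0))"
      using card_neighbours_at_distance[OF assms(1) x(1)] by (intro sum.cong) (auto simp: algebra_simps)
    also have "\<dots> = c_num (Suc i) * y (Suc i) + a_num i * y i
      + (if i = 0 then 0 else b_num (i - 1) * y (i - 1))"
      unfolding y_def using finite_vertices
      by (simp add: sum.distrib sum.If_cases sum_distrib_left Int_def)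
    finally show ?thesis .
  qed
  ultimately show ?thesis using x(2) unfolding tridiag_left_eigen_def by (intro exI[of _ y]) auto
qed

lemma sum_neighbours_tridiag_right_eigen:
  assumes "0 < D" "tridiag_right_eigen D a_num b_num c_num \<mu> u" "z \<in> V" "x \<in> V"
  shows "(\<Sum>w\<in>neighbours x. u (gdist E z w)) = \<mu> * u (gdist E z x)"
  using assms gdist_le_diameter[OF assms(3,4)]
  by (simp add: sum_neighbours_gdist tridiag_right_eigen_def)

lemma adj_eigenvalue_of_tridiag_right_eigen:
  assumes "0 < D" "tridiag_right_eigen D a_num b_num c_num \<mu> u" "u 0 \<noteq> 0"
  shows "adj_eigenvalue V E \<mu>"
proof -
  obtain z where "z \<in> V"
    using drg unfolding distance_regular_def diameter_is_def by blast
  then show ?thesis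
    using sum_neighbours_tridiag_right_eigen[OF assms(1,2)] assms(3)
    unfolding adj_eigenvalue_def neighbours_def
    by (intro exI[of _ "\<lambda>w. u (gdist E z w)"]) (auto intro: bexI[of _ z])
qed

lemma theta_min_eq_alternating_eigen:
  assumes "0 < D" and u: "tridiag_right_eigen D a_num b_num c_num \<mu> u"
    and u_nz: "\<forall>i\<le>D. u i \<noteq> 0" and u_alt: "\<forall>i<D. u i * u (Suc i) < 0"
  shows "theta_min V E = \<mu>"
proof -
  have b_pos: "\<forall>i<D. b_num i > 0" using bi_pos by (simp add: b_num_def)
  have c_pos: "\<forall>i. 1 \<le> i \<and> i \<le> D \<longrightarrow> c_num i > 0" using ci_pos by (simp add: c_num_def)
  have "{\<theta>. adj_eigenvalue V E \<theta>} \<subseteq> {\<theta>. \<exists>y. tridiag_left_eigen D a_num b_num c_num \<theta> y \<and> y 0 \<noteq> 0}"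
    using adj_eigenvalue_tridiag_left_eigen[OF assms(1)] by blast
  then have "finite {\<theta>. adj_eigenvalue V E \<theta>}"
    using finite_tridiag_eigenvalues[OF c_pos] assms(1) by (auto elim: finite_subset)
  moreover have "\<mu> \<le> \<theta>" if "adj_eigenvalue V E \<theta>" for \<theta>
    using adj_eigenvalue_tridiag_left_eigen[OF assms(1) that]
      tridiag_eigenvalue_lower_bound[OF b_pos c_pos _ _ u u_nz u_alt]
    by (auto simp: b_num_def c_num_def)
  ultimately show ?thesis
    unfolding theta_min_def using adj_eigenvalue_of_tridiag_right_eigen[OF assms(1) u] u_nz
    by (intro Min_eqI) auto
qed

end

section \<open>Classical parameters\<close>

lemma gbr_0 [simp]: "gbr b 0 = 0"
  by (simp add: gbr_def)

lemma gbr_Suc: "b \<noteq> 1 \<Longrightarrow> gbr b (Suc j) = 1 + real_of_int b * gbr b j"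
  by (simp add: gbr_def field_simps)

lemma gbr_1 [simp]: "b \<noteq> 1 \<Longrightarrow> gbr b 1 = 1"
  using gbr_Suc[of b 0] by simp

lemma gbr_2: "b \<noteq> 1 \<Longrightarrow> gbr b 2 = 1 + real_of_int b"
  by (simp add: numeral_2_eq_2 gbr_Suc)

lemma gbr_nonneg: "1 < b \<Longrightarrow> gbr b j \<ge> 0"
  by (induction j) (simp_all add: gbr_Suc)

lemma gbr_strict_mono: "1 < b \<Longrightarrow> i < j \<Longrightarrow> gbr b i < gbr b j"
proof (induction j)
  case (Suc j)
  have "gbr b j < gbr b (Suc j)"
    using gbr_nonneg[OF Suc.prems(1), of j] Suc.prems(1) gbr_Suc[of b j]
    by (smt (verit) mult_le_cancel_right1 of_int_less_iff of_int_1)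
  then show ?case using Suc by (auto simp: less_Suc_eq)
qed simp

lemma gbr_pos: "1 < b \<Longrightarrow> 1 \<le> j \<Longrightarrow> gbr b j > 0"
  using gbr_strict_mono[of b 0 j] by simp

text \<open>The values, at distance \<open>i\<close> from a fixed vertex, of the eigenvector for \<open>-[D]\<close>.\<close>
primrec useq :: "int \<Rightarrow> real \<Rightarrow> real \<Rightarrow> nat \<Rightarrow> real" where
  "useq b \<alpha> \<beta> 0 = 1"
| "useq b \<alpha> \<beta> (Suc i) = - useq b \<alpha> \<beta> i * (1 + \<alpha> * gbr b i) / (\<beta> - \<alpha> * gbr b i)"

locale classical_drg = distance_regular_graph +
  fixes b :: int and \<alpha> \<beta> :: real
  assumes classical: "classical_parameters D bi ci b \<alpha> \<beta>"
    and b_gt_1: "1 < b" and D_pos: "0 < D"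
begin

abbreviation u :: "nat \<Rightarrow> real" where
  "u \<equiv> useq b \<alpha> \<beta>"

lemma b_num_classical: "i \<le> D \<Longrightarrow> b_num i = (gbr b D - gbr b i) * (\<beta> - \<alpha> * gbr b i)"
  using classical unfolding classical_parameters_def b_num_def by auto

lemma c_num_classical: "i \<le> D \<Longrightarrow> c_num i = gbr b i * (1 + \<alpha> * gbr b (i - 1))"
  using classical unfolding classical_parameters_def c_num_def by auto

lemma valency_classical: "real (bi 0) = gbr b D * \<beta>"
  using b_num_classical[of 0] D_pos by (simp add: b_num_def)

lemma beta_minus_alpha_gbr_pos: "i < D \<Longrightarrow> \<beta> - \<alpha> * gbr b i > 0"
proof -
  assume "i < D"
  then have "(gbr b D - gbr b i) * (\<beta> - \<alpha> * gbr b i) > 0"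
    using bi_pos[of i] b_num_classical[of i] by (simp add: b_num_def)
  then show ?thesis using gbr_strict_mono[OF b_gt_1 \<open>i < D\<close>] by (simp add: zero_less_mult_iff)
qed

lemma one_plus_alpha_gbr_pos: "i < D \<Longrightarrow> 1 + \<alpha> * gbr b i > 0"
proof -
  assume "i < D"
  then have "gbr b (Suc i) * (1 + \<alpha> * gbr b i) > 0"
    using ci_pos[of "Suc i"] c_num_classical[of "Suc i"] by (simp add: c_num_def)
  then show ?thesis using gbr_pos[OF b_gt_1, of "Suc i"] by (simp add: zero_less_mult_iff)
qed

lemma beta_pos: "\<beta> > 0"
  using beta_minus_alpha_gbr_pos[OF D_pos] by simp

lemma useq_nonzero: "i \<le> D \<Longrightarrow> u i \<noteq> 0"
proof (induction i)
  case (Suc i)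
  then show ?case using one_plus_alpha_gbr_pos[of i] beta_minus_alpha_gbr_pos[of i] by simp
qed simp

lemma useq_alternating: "i < D \<Longrightarrow> u i * u (Suc i) < 0"
proof -
  assume "i < D"
  then have "(u i)\<^sup>2 * ((1 + \<alpha> * gbr b i) / (\<beta> - \<alpha> * gbr b i)) > 0"
    using useq_nonzero[of i] one_plus_alpha_gbr_pos beta_minus_alpha_gbr_pos by simp
  then show ?thesis by (simp add: power2_eq_square)
qed

lemma useq_tridiag_right_eigen: "tridiag_right_eigen D a_num b_num c_num (- gbr b D) u"
  unfolding tridiag_right_eigen_def
proof (intro allI impI)
  fix i assume i: "i \<le> D"
  have upper: "b_num i * u (Suc i) = - (gbr b D - gbr b i) * (1 + \<alpha> * gbr b i) * u i"
  proof (cases "i = D")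
    case False
    then have "\<beta> - \<alpha> * gbr b i \<noteq> 0" using beta_minus_alpha_gbr_pos[of i] i by simp
    then show ?thesis using i by (simp add: b_num_classical field_simps)
  qed (simp add: b_num_def)
  have lower: "c_num i * u (i - 1) = - gbr b i * (\<beta> - \<alpha> * gbr b (i - 1)) * u i"
  proof (cases i)
    case (Suc j)
    then have "\<beta> - \<alpha> * gbr b j \<noteq> 0" "1 + \<alpha> * gbr b j \<noteq> 0"
      using beta_minus_alpha_gbr_pos[of j] one_plus_alpha_gbr_pos[of j] i by auto
    then show ?thesis using Suc i by (simp add: c_num_classical field_simps)
  qed (simp add: c_num_def)
  show "c_num i * u (i - 1) + a_num i * u i + b_num i * u (Suc i) = - gbr b D * u i"
    unfolding a_num_def upper lower valency_classical
    using i by (simp add: b_num_classical c_num_classical algebra_simps)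
qed

lemma theta_min_classical: "theta_min V E = - gbr b D"
  using theta_min_eq_alternating_eigen[OF D_pos useq_tridiag_right_eigen] useq_nonzero useq_alternating
  by blast

end

section \<open>Geometric graphs with classical parameters\<close>

locale geometric_classical_drg = classical_drg +
  fixes \<C> :: "'a set set"
  assumes geom: "geometric V E (bi 0) \<C>"
begin

lemma line_subset: "L \<in> \<C> \<Longrightarrow> L \<subseteq> V"
  using geom unfolding geometric_def delsarte_clique_def is_clique_def by blast

lemma line_adj: "L \<in> \<C> \<Longrightarrow> a \<in> L \<Longrightarrow> c \<in> L \<Longrightarrow> a \<noteq> c \<Longrightarrow> E a c"
  using geom unfolding geometric_def delsarte_clique_def is_clique_def by blast

lemma line_through_adj: "E x y \<Longrightarrow> \<exists>L\<in>\<C>. x \<in> L \<and> y \<in> L"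
  using geom unfolding geometric_def by blast

lemma line_unique: "E x y \<Longrightarrow> K \<in> \<C> \<Longrightarrow> x \<in> K \<Longrightarrow> y \<in> K \<Longrightarrow> K' \<in> \<C> \<Longrightarrow> x \<in> K' \<Longrightarrow> y \<in> K' \<Longrightarrow> K = K'"
  using geom unfolding geometric_def by blast

lemma finite_lines: "finite \<C>"
  using line_subset finite_vertices by (meson Pow_iff finite_Pow_iff finite_subset subsetI)

lemma finite_line: "L \<in> \<C> \<Longrightarrow> finite L"
  using line_subset finite_vertices finite_subset by blast

lemma card_line: "L \<in> \<C> \<Longrightarrow> real (card L) = 1 + \<beta>"
  using geom gbr_pos[OF b_gt_1, of D] D_pos
  unfolding geometric_def delsarte_clique_def theta_min_classical valency_classical by auto

definition lines_at :: "'a \<Rightarrow> 'a set set" where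
  "lines_at x = {L\<in>\<C>. x \<in> L}"

lemma finite_lines_at: "finite (lines_at x)"
  unfolding lines_at_def using finite_lines by simp

lemma neighbours_eq_UN_lines_at: "neighbours x = (\<Union>L\<in>lines_at x. L - {x})"
proof (intro equalityI subsetI)
  fix w assume "w \<in> neighbours x"
  then have "E x w" unfolding neighbours_def by simp
  then show "w \<in> (\<Union>L\<in>lines_at x. L - {x})"
    using line_through_adj[of x w] adj_irrefl unfolding lines_at_def by blast
next
  fix w assume "w \<in> (\<Union>L\<in>lines_at x. L - {x})"
  then obtain L where "L \<in> \<C>" "x \<in> L" "w \<in> L" "w \<noteq> x" unfolding lines_at_def by blast
  then show "w \<in> neighbours x" unfolding neighbours_def using line_adj line_subset by blast
qed

lemma lines_at_disjoint:
  "L \<in> lines_at x \<Longrightarrow> L' \<in> lines_at x \<Longrightarrow> L \<noteq> L' \<Longrightarrow> (L - {x}) \<inter> (L' - {x}) = {}"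
proof -
  assume "L \<in> lines_at x" "L' \<in> lines_at x" "L \<noteq> L'"
  then have "w \<notin> L'" if "w \<in> L" "w \<noteq> x" for w
    using that line_adj line_unique[of x w L L'] unfolding lines_at_def by blast
  then show ?thesis by blast
qed

lemma card_lines_at: "x \<in> V \<Longrightarrow> real (card (lines_at x)) = gbr b D"
proof -
  assume "x \<in> V"
  have "card (neighbours x) = (\<Sum>L\<in>lines_at x. card (L - {x}))"
    unfolding neighbours_eq_UN_lines_at using finite_lines_at finite_line lines_at_disjoint
    by (intro card_UN_disjoint) (auto simp: lines_at_def)
  then have "real (bi 0) = (\<Sum>L\<in>lines_at x. real (card (L - {x})))"
    using card_neighbours[OF D_pos \<open>x \<in> V\<close>] by simp
  also have "\<dots> = (\<Sum>L\<in>lines_at x. \<beta>)"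
  proof (rule sum.cong)
    fix L assume "L \<in> lines_at x"
    then have "L \<in> \<C>" "x \<in> L" unfolding lines_at_def by auto
    then have "card L \<ge> 1" using finite_line[of L] by (auto simp: Suc_le_eq card_gt_0_iff)
    then show "real (card (L - {x})) = \<beta>"
      using card_line[OF \<open>L \<in> \<C>\<close>] \<open>x \<in> L\<close> finite_line[OF \<open>L \<in> \<C>\<close>] by (simp add: of_nat_diff)
  qed simp
  also have "\<dots> = real (card (lines_at x)) * \<beta>" by simp
  finally show ?thesis using valency_classical beta_pos by simp
qed

lemma sum_lines_at_line_sums:
  assumes "z \<in> V" "x \<in> V"
  shows "(\<Sum>L\<in>lines_at x. \<Sum>w\<in>L. u (gdist E z w)) = 0"
proof -
  have "(\<Sum>L\<in>lines_at x. \<Sum>w\<in>L. u (gdist E z w))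
      = (\<Sum>L\<in>lines_at x. u (gdist E z x) + (\<Sum>w\<in>L - {x}. u (gdist E z w)))"
    using finite_line by (intro sum.cong) (auto simp: lines_at_def sum.remove)
  also have "\<dots> = real (card (lines_at x)) * u (gdist E z x) + (\<Sum>w\<in>neighbours x. u (gdist E z w))"
    unfolding neighbours_eq_UN_lines_at sum.distrib using finite_lines_at finite_line lines_at_disjoint
    by (subst sum.UNION_disjoint) (auto simp: lines_at_def)
  also have "\<dots> = 0"
    using card_lines_at sum_neighbours_tridiag_right_eigen[OF D_pos useq_tridiag_right_eigen] assms
    by simp
  finally show ?thesis .
qed

text \<open>Writing \<open>S L\<close> for the sum over a line, \<open>\<Sum>\<^sub>L (S L)\<^sup>2 = \<Sum>\<^sub>x u x * \<Sum>\<^bsub>L \<ni> x\<^esub> S L\<close>,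
  and every inner sum vanishes.\<close>
lemma sum_line_useq_eq_0:
  assumes "z \<in> V" "L \<in> \<C>"
  shows "(\<Sum>w\<in>L. u (gdist E z w)) = 0"
proof -
  define S where "S L = (\<Sum>w\<in>L. u (gdist E z w))" for L
  have "(\<Sum>L\<in>\<C>. (S L)\<^sup>2) = (\<Sum>L\<in>\<C>. \<Sum>x\<in>V. if x \<in> L then u (gdist E z x) * S L else 0)"
  proof (rule sum.cong)
    fix L assume "L \<in> \<C>"
    then have "{x\<in>V. x \<in> L} = L" using line_subset by blast
    then have "(\<Sum>x\<in>V. if x \<in> L then u (gdist E z x) * S L else 0) = (\<Sum>x\<in>L. u (gdist E z x) * S L)"
      using sum.inter_filter[OF finite_vertices, of "\<lambda>x. u (gdist E z x) * S L" "\<lambda>x. x \<in> L"] by simp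
    then show "(S L)\<^sup>2 = (\<Sum>x\<in>V. if x \<in> L then u (gdist E z x) * S L else 0)"
      by (simp add: power2_eq_square sum_distrib_right S_def)
  qed simp
  also have "\<dots> = (\<Sum>x\<in>V. u (gdist E z x) * (\<Sum>L\<in>lines_at x. S L))"
    unfolding lines_at_def sum_distrib_left using finite_lines
    by (subst sum.swap) (simp add: sum.If_cases Int_def conj_commute)
  also have "\<dots> = 0"
    using sum_lines_at_line_sums[OF assms(1)] by (simp add: S_def)
  finally have "(\<Sum>L\<in>\<C>. (S L)\<^sup>2) = 0" .
  then show ?thesis
    using finite_lines assms(2) by (simp add: sum_nonneg_eq_0_iff S_def)
qed

lemma line_gdist_cases:
  assumes "z \<in> V" "L \<in> \<C>" "w0 \<in> L" "\<forall>w\<in>L. gdist E z w0 \<le> gdist E z w" "w \<in> L"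
  shows "gdist E z w = gdist E z w0 \<or> gdist E z w = Suc (gdist E z w0)"
proof (cases "w = w0")
  case False
  then have "gdist E z w \<le> gdist E z w0 + 1"
    using gdist_adj_le[OF assms(1) line_adj[OF assms(2,3,5)]] by simp
  then show ?thesis using assms(4,5) by fastforce
qed simp

lemma card_line_nearest:
  assumes z: "z \<in> V" and L: "L \<in> \<C>" and w0: "w0 \<in> L"
    and nearest: "\<forall>w\<in>L. gdist E z w0 \<le> gdist E z w" and "gdist E z w0 < D"
  shows "real (card {w\<in>L. gdist E z w = gdist E z w0}) = 1 + \<alpha> * gbr b (gdist E z w0)"
proof -
  define i where "i = gdist E z w0"
  define n0 where "n0 = real (card {w\<in>L. gdist E z w = i})"
  define n1 where "n1 = real (card {w\<in>L. gdist E z w = Suc i})"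
  have split: "L = {w\<in>L. gdist E z w = i} \<union> {w\<in>L. gdist E z w = Suc i}"
    using line_gdist_cases[OF z L w0 nearest] unfolding i_def by auto
  have "n0 + n1 = 1 + \<beta>"
    using card_line[OF L] finite_line[OF L] unfolding n0_def n1_def
    by (subst (asm) split) (simp add: card_Un_disjoint disjoint_iff)
  moreover have "n0 * u i + n1 * u (Suc i) = 0"
  proof -
    have "(\<Sum>w\<in>L. u (gdist E z w)) = (\<Sum>w\<in>{w\<in>L. gdist E z w = i}. u i) + (\<Sum>w\<in>{w\<in>L. gdist E z w = Suc i}. u (Suc i))"
      using finite_line[OF L] by (subst split) (simp add: sum.union_disjoint disjoint_iff)
    then show ?thesis using sum_line_useq_eq_0[OF z L] unfolding n0_def n1_def by simp
  qed
  moreover have "i < D" using \<open>gdist E z w0 < D\<close> unfolding i_def .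
  ultimately have "(n0 * (\<beta> - \<alpha> * gbr b i) - n1 * (1 + \<alpha> * gbr b i)) * u i = 0"
    using beta_minus_alpha_gbr_pos[of i] by (simp add: field_simps)
  then have "n0 * (\<beta> - \<alpha> * gbr b i) = n1 * (1 + \<alpha> * gbr b i)"
    using useq_nonzero[of i] \<open>i < D\<close> by simp
  then have "n0 * (1 + \<beta>) = (n0 + n1) * (1 + \<alpha> * gbr b i)"
    by (simp add: algebra_simps)
  then have "n0 * (1 + \<beta>) = (1 + \<beta>) * (1 + \<alpha> * gbr b i)"
    unfolding \<open>n0 + n1 = 1 + \<beta>\<close> .
  then show ?thesis using beta_pos unfolding n0_def i_def by simp
qed

lemma one_plus_alpha_pos: "1 < D \<Longrightarrow> 1 + \<alpha> > 0"
  using one_plus_alpha_gbr_pos[of 1] gbr_1[of b] b_gt_1 by simp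

lemma card_line_neighbours:
  assumes "1 < D" "z \<in> V" "L \<in> \<C>" "z \<notin> L" "w0 \<in> L" "E z w0"
  shows "real (card {w\<in>L. E z w}) = 1 + \<alpha>"
proof -
  have "E z w \<longleftrightarrow> gdist E z w = gdist E z w0" if "w \<in> L" for w
    using gdist_eq_1_iff[OF assms(2)] line_subset[OF assms(3)] that gdist_adj[OF assms(6)] by auto
  then have "{w\<in>L. E z w} = {w\<in>L. gdist E z w = gdist E z w0}" by auto
  moreover have "\<forall>w\<in>L. gdist E z w0 \<le> gdist E z w"
    using assms gdist_adj gdist_eq_0_iff line_subset by (fastforce simp: Suc_le_eq)
  ultimately show ?thesis
    using card_line_nearest[OF assms(2,3,5)] assms b_gt_1 by (simp add: gdist_adj gbr_Suc)
qed

lemma card_line_neighbours_le: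
  assumes "1 < D" "z \<in> V" "L \<in> \<C>" "z \<notin> L"
  shows "real (card {w\<in>L. E z w}) \<le> 1 + \<alpha>"
proof (cases "\<exists>w0\<in>L. E z w0")
  case True then show ?thesis using card_line_neighbours[OF assms] by auto
next
  case False
  then have "{w\<in>L. E z w} = {}" by auto
  then show ?thesis using one_plus_alpha_pos[OF assms(1)] by (metis card.empty of_nat_0 less_imp_le)
qed

lemma card_line_dist2:
  assumes "2 < D" "z \<in> V" "L \<in> \<C>" "w0 \<in> L" "gdist E z w0 = 2" "\<forall>w\<in>L. 2 \<le> gdist E z w"
  shows "real (card {w\<in>L. gdist E z w = 2}) = 1 + \<alpha> * (1 + real_of_int b)"
  using card_line_nearest[OF assms(2-4)] assms b_gt_1 by (simp add: gbr_2)

lemma line_has_dist3: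
  assumes "2 < D" "z \<in> V" "L \<in> \<C>" "w0 \<in> L" "gdist E z w0 = 2" "\<forall>w\<in>L. 2 \<le> gdist E z w"
  shows "\<exists>w\<in>L. gdist E z w = 3"
proof -
  have "real (card {w\<in>L. gdist E z w = 2}) < real (card L)"
    using card_line_dist2[OF assms] card_line[OF assms(3)] beta_minus_alpha_gbr_pos[OF assms(1)] b_gt_1
    by (simp add: gbr_2)
  then have "{w\<in>L. gdist E z w = 2} \<noteq> L" by auto
  then obtain w where "w \<in> L" "gdist E z w \<noteq> 2" by blast
  then show ?thesis
    using line_gdist_cases[OF assms(2-4)] assms(5,6) by (auto simp: numeral_3_eq_3)
qed

lemma notin_line_at_dist2:
  assumes "gdist E x y = 2" "M \<in> \<C>" "x \<in> M"
  shows "y \<notin> M"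
  using assms line_adj[OF assms(2,3), of y] gdist_adj[of x y] by force

lemma line_set_iff:
  assumes "2 < D" "x \<in> V" "y \<in> V" "gdist E x y = 2"
  shows "M \<in> line_set E \<C> x y \<longleftrightarrow> M \<in> \<C> \<and> x \<in> M \<and> (\<exists>w\<in>M. E y w)"
proof
  assume M: "M \<in> \<C> \<and> x \<in> M \<and> (\<exists>w\<in>M. E y w)"
  then obtain w where w: "w \<in> M" "E y w" by blast
  have "gdist E y v \<le> 2" if "v \<in> M" for v
    using gdist_adj[OF w(2)] gdist_adj_le[OF assms(3) line_adj[OF _ w(1) that]] M
    by (cases "v = w") auto
  then show "M \<in> line_set E \<C> x y" unfolding line_set_def using M by simp
next
  assume "M \<in> line_set E \<C> x y"
  then have M: "M \<in> \<C>" "x \<in> M" and near: "\<forall>v\<in>M. gdist E y v \<le> 2"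
    unfolding line_set_def by auto
  show "M \<in> \<C> \<and> x \<in> M \<and> (\<exists>w\<in>M. E y w)"
  proof (rule ccontr)
    assume "\<not> ?thesis"
    then have "\<forall>w\<in>M. \<not> E y w" using M by blast
    have "2 \<le> gdist E y w" if "w \<in> M" for w
    proof -
      have "w \<in> V" "w \<noteq> y" "\<not> E y w"
        using that line_subset[OF M(1)] notin_line_at_dist2[OF assms(4) M] \<open>\<forall>w\<in>M. \<not> E y w\<close>
        by auto
      then show ?thesis using gdist_eq_0_iff[OF assms(3)] gdist_eq_1_iff[OF assms(3)] by fastforce
    qed
    moreover have "gdist E y x = 2" using gdist_commute assms(2-4) by simp
    ultimately obtain w where "w \<in> M" "gdist E y w = 3"
      using line_has_dist3[OF assms(1,3) M(1,2)] by blast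
    then show False using near by fastforce
  qed
qed

lemma line_set_adj_common:
  assumes "2 < D" "x \<in> V" "y \<in> V" "gdist E x y = 2" "M \<in> line_set E \<C> x y" "w \<in> M" "E y w"
  shows "E x w"
proof -
  have "M \<in> \<C>" "x \<in> M" using assms(5) by (simp_all add: line_set_iff[OF assms(1-4)])
  moreover have "w \<noteq> x" using assms(2-4,7) gdist_adj[of y x] gdist_commute by auto
  ultimately show ?thesis using line_adj assms(6) by blast
qed

lemma common_neighbours_eq_UN_line_set:
  assumes "2 < D" "x \<in> V" "y \<in> V" "gdist E x y = 2"
  shows "{z\<in>V. E y z \<and> gdist E x z = 2 - 1} = (\<Union>M\<in>line_set E \<C> x y. {w\<in>M. E y w})"
proof (intro equalityI subsetI)
  fix w assume "w \<in> {z\<in>V. E y z \<and> gdist E x z = 2 - 1}"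
  then have "E y w" "E x w" using gdist_eq_1_iff[OF assms(2)] by auto
  obtain K where K: "K \<in> \<C>" "x \<in> K" "w \<in> K" using line_through_adj[OF \<open>E x w\<close>] by blast
  then have "K \<in> line_set E \<C> x y" using \<open>E y w\<close> by (auto simp: line_set_iff[OF assms])
  then show "w \<in> (\<Union>M\<in>line_set E \<C> x y. {w\<in>M. E y w})" using K(3) \<open>E y w\<close> by blast
next
  fix w assume "w \<in> (\<Union>M\<in>line_set E \<C> x y. {w\<in>M. E y w})"
  then obtain M where "M \<in> line_set E \<C> x y" "w \<in> M" "E y w" by blast
  then have "E x w" by (rule line_set_adj_common[OF assms])
  then show "w \<in> {z\<in>V. E y z \<and> gdist E x z = 2 - 1}"
    using \<open>E y w\<close> gdist_adj[of x w] adj_vertices[of x w] by simp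
qed

lemma card_line_set:
  assumes "2 < D" "x \<in> V" "y \<in> V" "gdist E x y = 2"
  shows "real (card (line_set E \<C> x y)) * (1 + \<alpha>) = real (ci 2)"
proof -
  let ?LS = "line_set E \<C> x y"
  have LS: "M \<in> \<C>" "x \<in> M" "\<exists>w\<in>M. E y w" if "M \<in> ?LS" for M
    using that by (simp_all add: line_set_iff[OF assms])
  have "ci 2 = card {z\<in>V. E y z \<and> gdist E x z = 2 - 1}"
    using card_c_neighbours[OF assms(2-4)] assms(1) by simp
  also have "\<dots> = (\<Sum>M\<in>?LS. card {w\<in>M. E y w})"
    unfolding common_neighbours_eq_UN_line_set[OF assms]
  proof (rule card_UN_disjoint)
    show "finite ?LS" using finite_lines finite_subset[of ?LS \<C>] by (auto simp: line_set_def)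
    show "\<forall>M\<in>?LS. finite {w\<in>M. E y w}" using LS(1) finite_line by simp
    show "\<forall>M\<in>?LS. \<forall>M'\<in>?LS. M \<noteq> M' \<longrightarrow> {w\<in>M. E y w} \<inter> {w\<in>M'. E y w} = {}"
      using line_unique line_set_adj_common[OF assms] LS by blast
  qed
  finally have "real (ci 2) = (\<Sum>M\<in>?LS. real (card {w\<in>M. E y w}))" by simp
  also have "\<dots> = (\<Sum>M\<in>?LS. 1 + \<alpha>)"
  proof (rule sum.cong)
    fix M assume "M \<in> ?LS"
    then obtain w where "w \<in> M" "E y w" using LS(3) by blast
    moreover have "y \<notin> M" using notin_line_at_dist2[OF assms(4) LS(1,2)] \<open>M \<in> ?LS\<close> by blast
    ultimately show "real (card {w\<in>M. E y w}) = 1 + \<alpha>"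
      using card_line_neighbours[OF _ assms(3) LS(1)[OF \<open>M \<in> ?LS\<close>]] assms(1) by simp
  qed simp
  finally show ?thesis by simp
qed

end

section \<open>A vertex at distance one from a line\<close>

lemma (in connected_simple_graph) dist_set_eq_1D:
  assumes "L \<subseteq> V" "L \<noteq> {}" "x \<in> V" "dist_set E x L = 1"
  shows "x \<notin> L" and "\<exists>p\<in>L. E x p"
proof -
  have "finite L" using assms(1) finite_vertices finite_subset by blast
  then have min: "Min (gdist E x ` L) \<in> gdist E x ` L" "\<forall>w\<in>L. Min (gdist E x ` L) \<le> gdist E x w"
    using assms(2) by auto
  then show "x \<notin> L" using assms(4) unfolding dist_set_def by fastforce
  obtain p where "p \<in> L" "gdist E x p = 1" using min(1) assms(4) unfolding dist_set_def by auto
  then show "\<exists>p\<in>L. E x p" using gdist_eq_1_iff[OF assms(3)] assms(1) by blast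
qed

locale point_near_line = geometric_classical_drg +
  fixes x :: 'a and L :: "'a set"
  assumes D_gt_2: "2 < D" and x_vertex: "x \<in> V" and line_L: "L \<in> \<C>"
    and x_notin_L: "x \<notin> L" and x_adj_L: "\<exists>p\<in>L. E x p"
begin

definition near :: "'a set" where
  "near = {p\<in>L. E x p}"

definition far :: "'a set" where
  "far = {y\<in>L. \<not> E x y}"

lemma L_vertices: "y \<in> L \<Longrightarrow> y \<in> V"
  using line_subset[OF line_L] by blast

lemma card_near: "real (card near) = 1 + \<alpha>"
  using x_adj_L card_line_neighbours[OF _ x_vertex line_L x_notin_L] D_gt_2
  unfolding near_def by auto

lemma alpha_nonneg: "\<alpha> \<ge> 0"
proof -
  have "near \<noteq> {}" using x_adj_L unfolding near_def by blast
  then have "card near \<ge> 1"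
    using finite_line[OF line_L] by (simp add: near_def Suc_le_eq card_gt_0_iff)
  then show ?thesis using card_near by simp
qed

lemma card_far: "real (card far) = \<beta> - \<alpha>"
proof -
  have "L = near \<union> far" "near \<inter> far = {}" unfolding near_def far_def by auto
  then have "card L = card near + card far"
    using finite_line[OF line_L] card_Un_disjoint[of near far] by (simp add: near_def far_def)
  then show ?thesis using card_line[OF line_L] card_near by simp
qed

lemma gdist_far: "y \<in> far \<Longrightarrow> gdist E x y = 2"
proof -
  assume y: "y \<in> far"
  obtain p where p: "p \<in> L" "E x p" using x_adj_L by blast
  have "y \<noteq> p" "y \<in> L" "\<not> E x y" "y \<noteq> x" using y p x_notin_L unfolding far_def by auto
  then have "gdist E x y \<le> 2"
    using gdist_adj_le[OF x_vertex line_adj[OF line_L p(1)]] gdist_adj[OF p(2)] by fastforce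
  moreover have "gdist E x y \<noteq> 0" "gdist E x y \<noteq> 1"
    using gdist_eq_0_iff[OF x_vertex] gdist_eq_1_iff[OF x_vertex] L_vertices[OF \<open>y \<in> L\<close>]
      \<open>\<not> E x y\<close> \<open>y \<noteq> x\<close> by auto
  ultimately show ?thesis by simp
qed

lemma far_vertices: "y \<in> far \<Longrightarrow> y \<in> V"
  unfolding far_def using L_vertices by blast

lemma line_set_far_iff:
  "y \<in> far \<Longrightarrow> M \<in> line_set E \<C> x y \<longleftrightarrow> M \<in> \<C> \<and> x \<in> M \<and> (\<exists>w\<in>M. E y w)"
  by (rule line_set_iff[OF D_gt_2 x_vertex far_vertices gdist_far])

lemma line_set_far_eq_of_subset:
  assumes "y \<in> far" "y' \<in> far" "line_set E \<C> x y \<subseteq> line_set E \<C> x y'"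
  shows "line_set E \<C> x y = line_set E \<C> x y'"
proof -
  have "real (card (line_set E \<C> x y)) * (1 + \<alpha>) = real (card (line_set E \<C> x y')) * (1 + \<alpha>)"
    using card_line_set[OF D_gt_2 x_vertex far_vertices gdist_far] assms(1,2) by simp
  then have "card (line_set E \<C> x y) = card (line_set E \<C> x y')"
    using one_plus_alpha_pos D_gt_2 by simp
  moreover have "finite (line_set E \<C> x y')"
    using finite_lines by (rule finite_subset[rotated]) (auto simp: line_set_def)
  ultimately show ?thesis using assms(3) card_subset_eq by blast
qed

definition avoiding :: "'a set set" where
  "avoiding = {M\<in>\<C>. x \<in> M \<and> M \<inter> near = {}}"

lemma finite_avoiding: "finite avoiding"
  unfolding avoiding_def using finite_lines by simp

lemma card_avoiding_le: "real (card avoiding) \<le> gbr b D - (1 + \<alpha>)"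
proof -
  have "\<forall>p\<in>near. \<exists>M. M \<in> \<C> \<and> x \<in> M \<and> p \<in> M"
    using line_through_adj unfolding near_def by blast
  from bchoice[OF this] obtain f where f: "\<And>p. p \<in> near \<Longrightarrow> f p \<in> \<C> \<and> x \<in> f p \<and> p \<in> f p"
    by blast
  have sub: "avoiding \<subseteq> lines_at x" unfolding lines_at_def avoiding_def by blast
  have inj: "inj_on f near"
  proof (rule inj_onI)
    fix p q assume pq: "p \<in> near" "q \<in> near" "f p = f q"
    show "p = q"
    proof (rule ccontr)
      assume "p \<noteq> q"
      then have "E p q" using pq line_adj[OF line_L] unfolding near_def by blast
      then have "f p = L" using line_unique[of p q "f p" L] f pq line_L unfolding near_def by auto
      then show False using f[OF pq(1)] x_notin_L by simp
    qed
  qed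
  have "f ` near \<subseteq> lines_at x - avoiding"
    using f unfolding lines_at_def avoiding_def by blast
  then have "card near \<le> card (lines_at x - avoiding)"
    using card_inj_on_le[OF inj] finite_lines_at by simp
  also have "\<dots> = card (lines_at x) - card avoiding"
    using finite_avoiding sub by (rule card_Diff_subset)
  finally have "card near + card avoiding \<le> card (lines_at x)"
    using card_mono[OF finite_lines_at sub] by linarith
  then show ?thesis using card_lines_at[OF x_vertex] card_near by linarith
qed

lemma avoiding_disjoint_L: "M \<in> avoiding \<Longrightarrow> L \<inter> M = {}"
  unfolding avoiding_def near_def using line_adj x_notin_L by blast

definition touching :: "'a set \<Rightarrow> 'a set" where
  "touching M = {y\<in>far. \<exists>w\<in>M. E y w}"

context
  fixes M y'
  assumes M_avoiding: "M \<in> avoiding" and y'_far: "y' \<in> far" and y'_nonadj: "\<forall>w\<in>M. \<not> E y' w"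
begin

lemma M_line: "M \<in> \<C>" "x \<in> M" "M \<inter> near = {}"
  using M_avoiding unfolding avoiding_def by auto

lemma M_vertices: "w \<in> M \<Longrightarrow> w \<in> V"
  using line_subset[OF M_line(1)] by blast

lemma gdist_y'_x: "gdist E y' x = 2"
  using gdist_far[OF y'_far] gdist_commute[OF x_vertex far_vertices[OF y'_far]] by simp

lemma gdist_y'_M_ge_2: "w \<in> M \<Longrightarrow> 2 \<le> gdist E y' w"
proof -
  assume w: "w \<in> M"
  have "y' \<in> L" using y'_far unfolding far_def by simp
  then have "w \<noteq> y'" using w avoiding_disjoint_L[OF M_avoiding] by blast
  then show ?thesis
    using gdist_eq_0_iff[OF far_vertices[OF y'_far] M_vertices[OF w]]
      gdist_eq_1_iff[OF far_vertices[OF y'_far] M_vertices[OF w]] y'_nonadj w by fastforce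
qed

definition sphere2 :: "'a set" where
  "sphere2 = {w\<in>M. gdist E y' w = 2}"

lemma card_sphere2: "real (card sphere2) = 1 + \<alpha> * (1 + real_of_int b)"
  unfolding sphere2_def
  using card_line_dist2[OF D_gt_2 far_vertices[OF y'_far] M_line(1,2) gdist_y'_x] gdist_y'_M_ge_2 by blast

lemma x_in_sphere2: "x \<in> sphere2"
  unfolding sphere2_def using M_line(2) gdist_y'_x by simp

lemma adj_L_in_sphere2:
  assumes "w \<in> M" "y \<in> L" "y \<noteq> y'" "E w y"
  shows "w \<in> sphere2"
proof -
  have "gdist E y' y = 1"
    using gdist_adj line_adj[OF line_L] assms(2,3) y'_far unfolding far_def by auto
  then have "gdist E y' w \<le> 2"
    using gdist_adj_le[OF far_vertices[OF y'_far] assms(4)[THEN adj_sym]] by simp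
  then show ?thesis using gdist_y'_M_ge_2[OF assms(1)] assms(1) unfolding sphere2_def by simp
qed

lemma touching_L: "y \<in> touching M \<Longrightarrow> y \<in> L \<and> \<not> E x y \<and> y \<notin> M"
  using avoiding_disjoint_L[OF M_avoiding] unfolding touching_def far_def by blast

lemma card_M_neighbours_of_touching: "y \<in> touching M \<Longrightarrow> real (card {w\<in>M. E y w}) = 1 + \<alpha>"
proof -
  assume y: "y \<in> touching M"
  then obtain w where "w \<in> M" "E y w" unfolding touching_def by blast
  then show ?thesis
    using card_line_neighbours[OF _ L_vertices M_line(1)] touching_L[OF y] D_gt_2 by simp
qed

lemma touching_neighbours_in_sphere2:
  assumes "y \<in> touching M" "w \<in> M" "E y w"
  shows "w \<in> sphere2 - {x}"
proof -
  have "y \<noteq> y'" using assms(2,3) y'_nonadj by blast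
  then have "w \<in> sphere2"
    using adj_L_in_sphere2[OF assms(2)] touching_L[OF assms(1)] assms(3) adj_sym by blast
  moreover have "w \<noteq> x" using touching_L[OF assms(1)] assms(3) adj_sym by blast
  ultimately show ?thesis by simp
qed

lemma near_neighbours_in_sphere2: "p \<in> near \<Longrightarrow> w \<in> M \<Longrightarrow> E w p \<Longrightarrow> w \<in> sphere2"
  using adj_L_in_sphere2 y'_far unfolding near_def far_def by blast

lemma card_L_neighbours_of_M:
  assumes "w \<in> M"
  shows "real (card {y\<in>touching M. E y w}) + real (card {p\<in>near. E w p}) \<le> 1 + \<alpha>"
proof -
  have "{y\<in>touching M. E y w} \<union> {p\<in>near. E w p} \<subseteq> {y\<in>L. E w y}"
    using touching_L adj_sym unfolding near_def by blast
  moreover have "{y\<in>touching M. E y w} \<inter> {p\<in>near. E w p} = {}"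
    using touching_L unfolding near_def by blast
  moreover have "finite {y\<in>L. E w y}" using finite_line[OF line_L] by simp
  ultimately have "card {y\<in>touching M. E y w} + card {p\<in>near. E w p} \<le> card {y\<in>L. E w y}"
    by (metis (no_types, lifting) card_Un_disjoint card_mono finite_Un rev_finite_subset)
  moreover have "w \<notin> L" using avoiding_disjoint_L[OF M_avoiding] assms by blast
  ultimately show ?thesis
    using card_line_neighbours_le[OF _ M_vertices[OF assms] line_L] D_gt_2 by fastforce
qed

lemma card_M_neighbours_of_near: "p \<in> near \<Longrightarrow> real (card {w\<in>M - {x}. E w p}) = \<alpha>"
proof -
  assume p: "p \<in> near"
  then have "p \<notin> M" "E p x" "p \<in> L" using M_line(3) adj_sym unfolding near_def by auto
  then have "real (card {w\<in>M. E p w}) = 1 + \<alpha>"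
    using card_line_neighbours[OF _ L_vertices M_line(1) _ M_line(2)] D_gt_2 by simp
  moreover have "{w\<in>M - {x}. E w p} = {w\<in>M. E p w} - {x}" using adj_sym by auto
  moreover have "x \<in> {w\<in>M. E p w}" using M_line(2) \<open>E p x\<close> by simp
  moreover have "card {w\<in>M. E p w} \<ge> 1"
    using \<open>x \<in> {w\<in>M. E p w}\<close> finite_line[OF M_line(1)] by (auto simp: Suc_le_eq card_gt_0_iff)
  ultimately show ?thesis by (simp add: of_nat_diff)
qed

lemma sum_sphere2_near_neighbours:
  "(\<Sum>w\<in>sphere2 - {x}. real (card {p\<in>near. E w p})) = (1 + \<alpha>) * \<alpha>"
proof -
  have "(\<Sum>w\<in>sphere2 - {x}. card {p\<in>near. E w p}) = (\<Sum>w\<in>M - {x}. card {p\<in>near. E w p})"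
    using finite_line[OF M_line(1)] near_neighbours_in_sphere2
    by (intro sum.mono_neutral_left) (auto simp: sphere2_def card_gt_0_iff)
  also have "\<dots> = (\<Sum>p\<in>near. card {w\<in>M - {x}. E w p})"
    using finite_line[OF M_line(1)] finite_line[OF line_L]
    by (intro sum_multicount_gen) (auto simp: near_def)
  finally have "(\<Sum>w\<in>sphere2 - {x}. real (card {p\<in>near. E w p})) = (\<Sum>p\<in>near. real (card {w\<in>M - {x}. E w p}))"
    by (metis (no_types, lifting) of_nat_sum sum.cong)
  also have "\<dots> = (\<Sum>p\<in>near. \<alpha>)" using card_M_neighbours_of_near by simp
  finally show ?thesis using card_near by simp
qed

lemma sum_sphere2_touching_neighbours:
  "real (card (touching M)) * (1 + \<alpha>) = (\<Sum>w\<in>sphere2 - {x}. real (card {y\<in>touching M. E y w}))"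
proof -
  have fin: "finite (touching M)" "finite M"
    using finite_line line_L M_line(1) unfolding touching_def far_def by auto
  have "real (card (touching M)) * (1 + \<alpha>) = real (\<Sum>y\<in>touching M. card {w\<in>M. E y w})"
    using card_M_neighbours_of_touching by simp
  also have "(\<Sum>y\<in>touching M. card {w\<in>M. E y w}) = (\<Sum>w\<in>M. card {y\<in>touching M. E y w})"
    using fin by (intro sum_multicount_gen) auto
  also have "\<dots> = (\<Sum>w\<in>sphere2 - {x}. card {y\<in>touching M. E y w})"
    using fin touching_neighbours_in_sphere2
    by (intro sum.mono_neutral_right) (auto simp: sphere2_def)
  finally show ?thesis by simp
qed

text \<open>Double counting the edges between \<open>touching M\<close> and \<open>M\<close>: they all end in
  \<open>sphere2 - {x}\<close>, where each vertex has at most \<open>1 + \<alpha>\<close> neighbours on \<open>L\<close>, some of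
  them in \<open>near\<close>.\<close>
lemma card_touching_le: "real (card (touching M)) \<le> \<alpha> * real_of_int b"
proof -
  have fin: "finite (sphere2 - {x})" using finite_line[OF M_line(1)] by (simp add: sphere2_def)
  have "real (card (touching M)) * (1 + \<alpha>) \<le> (\<Sum>w\<in>sphere2 - {x}. 1 + \<alpha> - real (card {p\<in>near. E w p}))"
    unfolding sum_sphere2_touching_neighbours
  proof (rule sum_mono)
    fix w assume "w \<in> sphere2 - {x}"
    then show "real (card {y\<in>touching M. E y w}) \<le> 1 + \<alpha> - real (card {p\<in>near. E w p})"
      using card_L_neighbours_of_M[of w] by (simp add: sphere2_def)
  qed
  also have "\<dots> = real (card (sphere2 - {x})) * (1 + \<alpha>) - (1 + \<alpha>) * \<alpha>"
    using sum_sphere2_near_neighbours by (simp add: sum_subtractf)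
  also have "real (card (sphere2 - {x})) = \<alpha> * (1 + real_of_int b)"
    using card_sphere2 x_in_sphere2 fin card_Diff1_less[of sphere2 x] by (simp add: of_nat_diff)
  finally have "real (card (touching M)) * (1 + \<alpha>) \<le> (\<alpha> * real_of_int b) * (1 + \<alpha>)"
    by (simp add: algebra_simps)
  then show ?thesis using one_plus_alpha_pos D_gt_2 by simp
qed

end

lemma finite_touching: "finite (touching M)"
  using finite_line[OF line_L] unfolding touching_def far_def by simp

lemma exists_far_point_dominated:
  assumes "\<beta> > (gbr b D - \<alpha> - 1) * \<alpha> * real_of_int b + \<alpha>"
  obtains y0 where "y0 \<in> far" "\<And>M. M \<in> avoiding \<Longrightarrow> y0 \<in> touching M \<Longrightarrow> touching M = far"
proof -
  define P where "P = {M\<in>avoiding. \<exists>y'\<in>far. \<forall>w\<in>M. \<not> E y' w}"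
  have "P \<subseteq> avoiding" unfolding P_def by blast
  then have "finite P" "card P \<le> card avoiding"
    using finite_avoiding by (auto intro: finite_subset card_mono)
  have "card (\<Union>M\<in>P. touching M) \<le> (\<Sum>M\<in>P. card (touching M))"
    using \<open>finite P\<close> by (rule card_UN_le)
  then have "real (card (\<Union>M\<in>P. touching M)) \<le> (\<Sum>M\<in>P. real (card (touching M)))"
    by (simp flip: of_nat_sum)
  also have "\<dots> \<le> (\<Sum>M\<in>P. \<alpha> * real_of_int b)"
    using card_touching_le unfolding P_def by (intro sum_mono) blast
  also have "\<dots> \<le> (gbr b D - (1 + \<alpha>)) * (\<alpha> * real_of_int b)"
    using \<open>card P \<le> card avoiding\<close> card_avoiding_le alpha_nonneg b_gt_1
    by (simp add: mult_right_mono)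
  also have "\<dots> < real (card far)"
    using assms card_far by (simp add: algebra_simps)
  finally have less: "card (\<Union>M\<in>P. touching M) < card far" by simp
  have "\<not> far \<subseteq> (\<Union>M\<in>P. touching M)"
  proof
    assume "far \<subseteq> (\<Union>M\<in>P. touching M)"
    then have "card far \<le> card (\<Union>M\<in>P. touching M)"
      using \<open>finite P\<close> finite_touching by (intro card_mono) auto
    then show False using less by simp
  qed
  then obtain y0 where y0: "y0 \<in> far" "\<forall>M\<in>P. y0 \<notin> touching M" by blast
  have "touching M = far" if "M \<in> avoiding" "y0 \<in> touching M" for M
  proof -
    have "M \<notin> P" using y0(2) that(2) by blast
    then have "\<forall>y'\<in>far. \<exists>w\<in>M. E y' w" using that(1) unfolding P_def by blast
    then show ?thesis unfolding touching_def by blast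
  qed
  then show ?thesis using that y0(1) by blast
qed

lemma line_set_subset_of_dominated:
  assumes "y0 \<in> far" "\<And>M. M \<in> avoiding \<Longrightarrow> y0 \<in> touching M \<Longrightarrow> touching M = far" "y \<in> far"
  shows "line_set E \<C> x y0 \<subseteq> line_set E \<C> x y"
proof
  fix M assume "M \<in> line_set E \<C> x y0"
  then have M: "M \<in> \<C>" "x \<in> M" "\<exists>w\<in>M. E y0 w" using line_set_far_iff[OF assms(1)] by auto
  have "\<exists>w\<in>M. E y w"
  proof (cases "M \<inter> near = {}")
    case False
    then obtain p where "p \<in> M" "p \<in> near" by blast
    moreover have "y \<noteq> p" "y \<in> L" using assms(3) \<open>p \<in> near\<close> unfolding far_def near_def by auto
    ultimately show ?thesis using line_adj[OF line_L] unfolding near_def by blast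
  next
    case True
    then have "M \<in> avoiding" "y0 \<in> touching M"
      using M assms(1) unfolding avoiding_def touching_def by auto
    then show ?thesis using assms(2,3) unfolding touching_def by blast
  qed
  then show "M \<in> line_set E \<C> x y" using line_set_far_iff[OF assms(3)] M(1,2) by blast
qed

lemma line_set_far_eq:
  assumes "\<beta> > (gbr b D - \<alpha> - 1) * \<alpha> * real_of_int b + \<alpha>" "y1 \<in> far" "y2 \<in> far"
  shows "line_set E \<C> x y1 = line_set E \<C> x y2"
proof -
  obtain y0 where "y0 \<in> far" "\<And>M. M \<in> avoiding \<Longrightarrow> y0 \<in> touching M \<Longrightarrow> touching M = far"
    using exists_far_point_dominated[OF assms(1)] by blast
  then have "line_set E \<C> x y0 = line_set E \<C> x y" if "y \<in> far" for y
    using line_set_far_eq_of_subset[OF \<open>y0 \<in> far\<close> that line_set_subset_of_dominated] that by blast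
  then show ?thesis using assms(2,3) by blast
qed

end

theorem theorem18:
  fixes V :: "'a set" and E :: "'a \<Rightarrow> 'a \<Rightarrow> bool" and D :: nat
    and bi ci :: "nat \<Rightarrow> nat" and b :: int and \<alpha> \<beta> :: real and \<C> :: "'a set set"
  assumes drg: "distance_regular V E D bi ci"
    and cp: "classical_parameters D bi ci b \<alpha> \<beta>"
    and b2: "b \<ge> 2" and D3: "D \<ge> 3"
    and geom: "geometric V E (bi 0) \<C>"
    and ineq: "\<beta> > (gbr b D - \<alpha> - 1) * \<alpha> * real_of_int b + \<alpha>"
  shows "\<forall>x\<in>V. \<forall>L\<in>\<C>. \<forall>y1\<in>L. \<forall>y2\<in>L.
           dist_set E x L = 1 \<and> gdist E x y1 = 2 \<and> gdist E x y2 = 2 \<longrightarrow>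
           line_set E \<C> x y1 = line_set E \<C> x y2"
proof (intro ballI impI, elim conjE)
  fix x L y1 y2
  assume x: "x \<in> V" and L: "L \<in> \<C>" and y: "y1 \<in> L" "y2 \<in> L"
    and dist: "dist_set E x L = 1" "gdist E x y1 = 2" "gdist E x y2 = 2"
  interpret geometric_classical_drg V E D bi ci b \<alpha> \<beta> \<C>
    using drg cp b2 D3 geom by unfold_locales auto
  have "x \<notin> L" "\<exists>p\<in>L. E x p"
    using dist_set_eq_1D[OF line_subset[OF L] _ x dist(1)] y by auto
  then interpret point_near_line V E D bi ci b \<alpha> \<beta> \<C> x L
    using D3 x L by unfold_locales auto
  have "y1 \<in> far" "y2 \<in> far"
    using y dist(2,3) gdist_adj unfolding far_def by auto
  then show "line_set E \<C> x y1 = line_set E \<C> x y2"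
    by (rule line_set_far_eq[OF ineq])
qed

end
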